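(* Let $n\ge1$, $N\ge1$, $p\in(0,1)$, and let $I:\{0,1\}^n\to\{0,1\}$ be a decoding-error indicator with error-correcting capability $t$ ($0\le t<n$, $I(\mathbf z)=0$ whenever $wt(\mathbf z)\le t$). For $q\in(0,1)$ let $\hat P_{IS}(e)=\frac1N\sum_{j=1}^N I(\mathbf z_j)W(wt(\mathbf z_j);p,q)$ with $\mathbf z_j$ i.i.d. with pmf $q^{wt(\mathbf z)}(1-q)^{n-wt(\mathbf z)}$. Then the function $q\mapsto\mathrm{var}_q[\hat P_{IS}(e)]$ is convex on $(0,1)$.
   Context: Setting: linear block code of length $n$ over a binary symmetric channel with cross-over probability $p$; all-zero codeword transmitted so the channel output is the error pattern $\mathbf z\in\{0,1\}^n$. $wt(\mathbf z)$ is the number of ones. $I(\mathbf z)=1$ iff $\mathbf z$ is erroneously decoded. $W(i;p,q)=\frac{p^i(1-p)^{n-i}}{q^i(1-q)^{n-i}}$. $\mathrm{var}_q$ is the variance when samples have pmf $q^{wt(\mathbf z)}(1-q)^{n-wt(\mathbf z)}$. *)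

theory Defs
  imports "HOL-Probability.Probability"
begin

text \<open>Binary words of length n are modelled as functions nat => bool, with
  coordinates 0..<n relevant (values outside are False, the default of Pi_pmf).\<close>

definition wt :: "nat \<Rightarrow> (nat \<Rightarrow> bool) \<Rightarrow> nat" where
  "wt n z = card {i \<in> {..<n}. z i}"

definition W :: "nat \<Rightarrow> nat \<Rightarrow> real \<Rightarrow> real \<Rightarrow> real" where
  "W n i p q = (p ^ i * (1 - p) ^ (n - i)) / (q ^ i * (1 - q) ^ (n - i))"

text \<open>Distribution of one error pattern: i.i.d. Bernoulli(q) bits, so its pmf is
  q^wt(z) (1-q)^(n-wt(z)) on {0,1}^n.\<close>
definition pattern_pmf :: "nat \<Rightarrow> real \<Rightarrow> (nat \<Rightarrow> bool) pmf" where
  "pattern_pmf n q = Pi_pmf {..<n} False (\<lambda>_. bernoulli_pmf q)"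

definition samples_pmf :: "nat \<Rightarrow> nat \<Rightarrow> real \<Rightarrow> (nat \<Rightarrow> nat \<Rightarrow> bool) pmf" where
  "samples_pmf N n q = Pi_pmf {..<N} (\<lambda>_. False) (\<lambda>_. pattern_pmf n q)"

definition P_IS :: "nat \<Rightarrow> nat \<Rightarrow> ((nat \<Rightarrow> bool) \<Rightarrow> real) \<Rightarrow> real \<Rightarrow> real
    \<Rightarrow> (nat \<Rightarrow> nat \<Rightarrow> bool) \<Rightarrow> real" where
  "P_IS N n I p q zs = (1 / real N) * (\<Sum>j<N. I (zs j) * W n (wt n (zs j)) p q)"

definition var_IS :: "nat \<Rightarrow> nat \<Rightarrow> ((nat \<Rightarrow> bool) \<Rightarrow> real) \<Rightarrow> real \<Rightarrow> real \<Rightarrow> real" where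
  "var_IS N n I p q = measure_pmf.variance (samples_pmf N n q) (P_IS N n I p q)"

end

theory Submission
  imports Defs
begin

text \<open>Write P_q(z) = q^wt(z) (1-q)^(n-wt(z)) for the probability of a word z of length n.
  The single-sample estimator I(z) W(wt(z); p, q) = I(z) P_p(z) / P_q(z) has mean
  sum_z I(z) P_p(z), independent of q (importance sampling is unbiased), and second moment
  sum_z I(z)^2 P_p(z)^2 / P_q(z), a nonnegative combination of the convex functions
  q \<mapsto> q^-a (1-q)^-b. The variance of the mean of N i.i.d. samples is the single-sample
  variance divided by N, hence convex in q as well.\<close>

definition binary_words :: "nat \<Rightarrow> (nat \<Rightarrow> bool) set" where
  "binary_words n = {z. \<forall>i\<ge>n. \<not> z i}"

definition word_prob :: "nat \<Rightarrow> real \<Rightarrow> (nat \<Rightarrow> bool) \<Rightarrow> real" where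
  "word_prob n q z = q ^ wt n z * (1 - q) ^ (n - wt n z)"

lemma binary_words_eq_PiE_dflt: "binary_words n = PiE_dflt {..<n} False (\<lambda>_. UNIV)"
  by (auto simp: binary_words_def PiE_dflt_def not_less)

lemma finite_binary_words: "finite (binary_words n)"
  unfolding binary_words_eq_PiE_dflt by (intro finite_PiE_dflt) auto

lemma set_pmf_pattern_pmf: "set_pmf (pattern_pmf n q) \<subseteq> binary_words n"
  unfolding pattern_pmf_def binary_words_eq_PiE_dflt
  by (rule order.trans[OF set_Pi_pmf_subset']) (auto simp: PiE_dflt_def)

lemma pmf_pattern_pmf:
  assumes "z \<in> binary_words n" "0 \<le> q" "q \<le> 1"
  shows "pmf (pattern_pmf n q) z = word_prob n q z"
proof -
  have "pmf (pattern_pmf n q) z = (\<Prod>i<n. if z i then q else 1 - q)"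
    using assms by (auto simp: pattern_pmf_def pmf_Pi binary_words_def intro!: prod.cong)
  also have "\<dots> = q ^ card {i \<in> {..<n}. z i} * (1 - q) ^ card {i \<in> {..<n}. \<not> z i}"
    by (simp add: prod.If_cases Int_def)
  also have "card {i \<in> {..<n}. \<not> z i} = n - wt n z"
  proof -
    have "{i \<in> {..<n}. \<not> z i} = {..<n} - {i \<in> {..<n}. z i}"
      by auto
    then show ?thesis
      by (simp only:) (subst card_Diff_subset; auto simp: wt_def)
  qed
  finally show ?thesis
    by (simp add: word_prob_def wt_def)
qed

lemma expectation_pattern_pmf:
  assumes "0 \<le> q" "q \<le> 1"
  shows "measure_pmf.expectation (pattern_pmf n q) f
       = (\<Sum>z\<in>binary_words n. f z * word_prob n q z)"
  using set_pmf_pattern_pmf assms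
  by (subst integral_measure_pmf_real[OF finite_binary_words]) (auto simp: pmf_pattern_pmf intro!: sum.cong)

lemma convex_on_cong:
  assumes "\<And>x. x \<in> S \<Longrightarrow> f x = g x"
  shows "convex_on S f \<longleftrightarrow> convex_on S g"
  unfolding convex_on_def using assms by (auto simp: convexD)

lemma convex_on_sum_fun:
  fixes F :: "'b \<Rightarrow> 'a::real_vector \<Rightarrow> real"
  assumes "finite A" "convex S" "\<And>z. z \<in> A \<Longrightarrow> convex_on S (F z)"
  shows "convex_on S (\<lambda>x. \<Sum>z\<in>A. F z x)"
  using assms by (induction A rule: finite_induct) (auto simp: convex_on_const)

lemma convex_on_exp_neg_ln:
  fixes a b :: real
  assumes "0 \<le> a" "0 \<le> b"
  shows "convex_on {0<..<1} (\<lambda>q. exp (- a * ln q - b * ln (1 - q)))"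
proof (rule f''_ge0_imp_convex)
  let ?f = "\<lambda>q. exp (- a * ln q - b * ln (1 - q))" and ?g = "\<lambda>q. b / (1 - q) - a / q"
  fix q :: real assume q: "q \<in> {0<..<1}"
  show f': "(?f has_real_derivative ?f q * ?g q) (at q)"
    using q by (auto intro!: derivative_eq_intros simp: field_simps)
  have g': "(?g has_real_derivative b / (1 - q)^2 + a / q^2) (at q)"
    using q by (auto intro!: derivative_eq_intros simp: field_simps power2_eq_square)
  show "((\<lambda>q. ?f q * ?g q) has_real_derivative
      ?f q * ((?g q)^2 + (b / (1 - q)^2 + a / q^2))) (at q)"
    by (rule DERIV_cong[OF DERIV_mult[OF f' g']])
      (simp only: power2_eq_square distrib_left distrib_right mult_ac add_ac)
  show "0 \<le> ?f q * ((?g q)^2 + (b / (1 - q)^2 + a / q^2))"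
    using assms by (intro mult_nonneg_nonneg add_nonneg_nonneg) auto
qed simp

lemma convex_on_powr_neg:
  fixes a b :: real
  assumes "0 \<le> a" "0 \<le> b"
  shows "convex_on {0<..<1} (\<lambda>q. q powr (- a) * (1 - q) powr (- b))"
proof -
  have "q powr (- a) * (1 - q) powr (- b) = exp (- a * ln q - b * ln (1 - q))"
    if "q \<in> {0<..<1}" for q :: real
  proof -
    have "q powr (- a) * (1 - q) powr (- b) = exp (- a * ln q) * exp (- b * ln (1 - q))"
      using that by (simp add: powr_def)
    also have "\<dots> = exp (- a * ln q - b * ln (1 - q))"
      by (simp add: exp_diff exp_minus divide_inverse)
    finally show ?thesis .
  qed
  then have "convex_on {0<..<1} (\<lambda>q. q powr (- a) * (1 - q) powr (- b))
      \<longleftrightarrow> convex_on {0<..<1} (\<lambda>q. exp (- a * ln q - b * ln (1 - q)))"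
    by (rule convex_on_cong)
  with convex_on_exp_neg_ln[OF assms] show ?thesis
    by blast
qed

lemma convex_on_divide_word_prob:
  assumes "0 \<le> c"
  shows "convex_on {0<..<1} (\<lambda>q. c / word_prob n q z)"
proof -
  have "c / word_prob n q z = c * (q powr - real (wt n z) * (1 - q) powr - real (n - wt n z))"
    if "q \<in> {0<..<1}" for q
    using that by (simp add: word_prob_def powr_minus_divide powr_realpow)
  then have "convex_on {0<..<1} (\<lambda>q. c / word_prob n q z) \<longleftrightarrow>
      convex_on {0<..<1} (\<lambda>q. c * (q powr - real (wt n z) * (1 - q) powr - real (n - wt n z)))"
    by (rule convex_on_cong)
  with assms show ?thesis
    by (simp add: convex_on_cmul convex_on_powr_neg)
qed

lemma expectation_Pi_pmf_component:
  fixes f :: "'b \<Rightarrow> real"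
  assumes "finite A" "j \<in> A"
  shows "measure_pmf.expectation (Pi_pmf A d p) (\<lambda>zs. f (zs j)) = measure_pmf.expectation (p j) f"
proof -
  have "measure_pmf.expectation (Pi_pmf A d p) (\<lambda>zs. f (zs j))
      = measure_pmf.expectation (map_pmf (\<lambda>zs. zs j) (Pi_pmf A d p)) f"
    by simp
  also have "map_pmf (\<lambda>zs. zs j) (Pi_pmf A d p) = p j"
    using assms by (simp add: Pi_pmf_component)
  finally show ?thesis .
qed

text \<open>The nonnegativity hypotheses are inherited from the library's product formula
  expectation_prod_Pi_pmf.\<close>

lemma expectation_Pi_pmf_mult_components:
  fixes f g :: "'b \<Rightarrow> real"
  assumes "finite A" "j \<in> A" "k \<in> A" "j \<noteq> k"
    and "integrable (measure_pmf (p j)) f" "integrable (measure_pmf (p k)) g"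
    and "\<And>z. z \<in> set_pmf (p j) \<Longrightarrow> 0 \<le> f z" "\<And>z. z \<in> set_pmf (p k) \<Longrightarrow> 0 \<le> g z"
  shows "measure_pmf.expectation (Pi_pmf A d p) (\<lambda>zs. f (zs j) * g (zs k))
       = measure_pmf.expectation (p j) f * measure_pmf.expectation (p k) g"
proof -
  define F where "F i z = (if i = j then f z else 1) * (if i = k then g z else 1)" for i z
  have int_F: "integrable (measure_pmf (p i)) (F i)" if "i \<in> A" for i
    using assms by (cases "i = j"; cases "i = k") (simp_all add: F_def[abs_def])
  have "measure_pmf.expectation (Pi_pmf A d p) (\<lambda>zs. \<Prod>i\<in>A. F i (zs i))
      = (\<Prod>i\<in>A. measure_pmf.expectation (p i) (F i))"
    by (intro expectation_prod_Pi_pmf int_F \<open>finite A\<close>) (use assms in \<open>auto simp: F_def\<close>)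
  moreover have "(\<Prod>i\<in>A. F i (zs i)) = f (zs j) * g (zs k)" for zs
    using assms by (simp add: F_def prod.distrib prod.delta)
  moreover have "measure_pmf.expectation (p i) (F i)
      = (if i = j then measure_pmf.expectation (p j) f else 1)
        * (if i = k then measure_pmf.expectation (p k) g else 1)" for i
    using assms by (cases "i = j"; cases "i = k") (simp_all add: F_def[abs_def])
  then have "(\<Prod>i\<in>A. measure_pmf.expectation (p i) (F i))
      = measure_pmf.expectation (p j) f * measure_pmf.expectation (p k) g"
    using assms by (simp add: prod.distrib prod.delta)
  ultimately show ?thesis
    by simp
qed

lemma expectation_square_sum_Pi_pmf:
  fixes M :: "'a pmf" and f :: "'a \<Rightarrow> real"
  assumes fin: "finite (set_pmf M)" and nonneg: "\<And>z. z \<in> set_pmf M \<Longrightarrow> 0 \<le> f z"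
  shows "measure_pmf.expectation (Pi_pmf {..<N} d (\<lambda>_. M)) (\<lambda>zs. (\<Sum>j<N. f (zs j))\<^sup>2)
       = real N * measure_pmf.expectation M (\<lambda>z. (f z)\<^sup>2)
         + (real N * real N - real N) * (measure_pmf.expectation M f)\<^sup>2"
proof -
  let ?P = "Pi_pmf {..<N} d (\<lambda>_. M)"
  let ?E1 = "measure_pmf.expectation M f" and ?E2 = "measure_pmf.expectation M (\<lambda>z. (f z)\<^sup>2)"
  have "finite (set_pmf ?P)"
    by (rule finite_subset[OF set_Pi_pmf_subset']) (use fin in auto)
  then have int_P: "integrable (measure_pmf ?P) h" for h :: "_ \<Rightarrow> real"
    by (rule integrable_measure_pmf_finite)
  have int_M: "integrable (measure_pmf M) h" for h :: "_ \<Rightarrow> real"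
    using fin by (rule integrable_measure_pmf_finite)
  have cross: "measure_pmf.expectation ?P (\<lambda>zs. f (zs j) * f (zs k)) = (if j = k then ?E2 else ?E1\<^sup>2)"
    if "j < N" "k < N" for j k
    using that nonneg expectation_Pi_pmf_component[of "{..<N}" j d "\<lambda>_. M" "\<lambda>z. (f z)\<^sup>2"]
    by (auto simp: power2_eq_square int_M expectation_Pi_pmf_mult_components)
  have "measure_pmf.expectation ?P (\<lambda>zs. (\<Sum>j<N. f (zs j))\<^sup>2)
      = (\<Sum>j<N. \<Sum>k<N. if j = k then ?E2 else ?E1\<^sup>2)"
    by (simp add: power2_eq_square sum_product integral_sum int_P cross)
  also have "\<dots> = (\<Sum>j<N. ?E2 - ?E1\<^sup>2 + real N * ?E1\<^sup>2)"
  proof (rule sum.cong)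
    fix j assume "j \<in> {..<N}"
    have "(\<Sum>k<N. if j = k then ?E2 else ?E1\<^sup>2) = (\<Sum>k<N. (if j = k then ?E2 - ?E1\<^sup>2 else 0) + ?E1\<^sup>2)"
      by (rule sum.cong) auto
    with \<open>j \<in> {..<N}\<close> show "(\<Sum>k<N. if j = k then ?E2 else ?E1\<^sup>2) = ?E2 - ?E1\<^sup>2 + real N * ?E1\<^sup>2"
      by (simp add: sum.distrib)
  qed simp
  also have "\<dots> = real N * ?E2 + (real N * real N - real N) * ?E1\<^sup>2"
    by (simp add: algebra_simps)
  finally show ?thesis .
qed

lemma variance_sample_mean_Pi_pmf:
  fixes M :: "'a pmf" and f :: "'a \<Rightarrow> real"
  assumes fin: "finite (set_pmf M)" and nonneg: "\<And>z. z \<in> set_pmf M \<Longrightarrow> 0 \<le> f z" and "N \<ge> 1"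
  shows "measure_pmf.variance (Pi_pmf {..<N} d (\<lambda>_. M)) (\<lambda>zs. (1 / real N) * (\<Sum>j<N. f (zs j)))
       = measure_pmf.variance M f / real N"
proof -
  let ?P = "Pi_pmf {..<N} d (\<lambda>_. M)"
  let ?E1 = "measure_pmf.expectation M f" and ?E2 = "measure_pmf.expectation M (\<lambda>z. (f z)\<^sup>2)"
  have "finite (set_pmf ?P)"
    by (rule finite_subset[OF set_Pi_pmf_subset']) (use fin in auto)
  then have int_P: "integrable (measure_pmf ?P) h" for h :: "_ \<Rightarrow> real"
    by (rule integrable_measure_pmf_finite)
  have second_moment: "measure_pmf.expectation ?P (\<lambda>zs. (\<Sum>j<N. f (zs j))\<^sup>2)
      = real N * ?E2 + (real N * real N - real N) * ?E1\<^sup>2"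
    by (rule expectation_square_sum_Pi_pmf[OF fin nonneg])
  have mean: "measure_pmf.expectation ?P (\<lambda>zs. \<Sum>j<N. f (zs j)) = real N * ?E1"
    by (simp add: integral_sum int_P expectation_Pi_pmf_component)
  have "measure_pmf.variance ?P (\<lambda>zs. (1 / real N) * (\<Sum>j<N. f (zs j)))
      = measure_pmf.expectation ?P (\<lambda>zs. (\<Sum>j<N. f (zs j))\<^sup>2) / (real N)\<^sup>2
        - (measure_pmf.expectation ?P (\<lambda>zs. \<Sum>j<N. f (zs j)) / real N)\<^sup>2"
    by (subst measure_pmf.variance_eq) (simp_all add: int_P power_mult_distrib power_divide)
  also have "\<dots> = (?E2 - ?E1\<^sup>2) / real N"
    unfolding second_moment mean
    using \<open>N \<ge> 1\<close> by (simp add: field_simps power2_eq_square)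
  also have "?E2 - ?E1\<^sup>2 = measure_pmf.variance M f"
    using fin by (simp add: measure_pmf.variance_eq integrable_measure_pmf_finite)
  finally show ?thesis .
qed

lemma var_IS_eq_sum:
  assumes "N \<ge> 1" "0 \<le> p" "p \<le> 1" "0 < q" "q < 1"
    and I_nonneg: "\<And>z. z \<in> binary_words n \<Longrightarrow> 0 \<le> I z"
  shows "var_IS N n I p q =
    ((\<Sum>z\<in>binary_words n. (I z * word_prob n p z)\<^sup>2 / word_prob n q z)
     - (\<Sum>z\<in>binary_words n. I z * word_prob n p z)\<^sup>2) / real N"
proof -
  define f where "f z = I z * W n (wt n z) p q" for z
  have fin: "finite (set_pmf (pattern_pmf n q))"
    using finite_binary_words set_pmf_pattern_pmf by (rule finite_subset[rotated])
  have f_nonneg: "0 \<le> f z" if "z \<in> set_pmf (pattern_pmf n q)" for z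
    using that set_pmf_pattern_pmf assms unfolding f_def W_def
    by (intro mult_nonneg_nonneg divide_nonneg_nonneg I_nonneg) auto
  have weighted: "f z * word_prob n q z = I z * word_prob n p z"
    and weighted_square: "(f z)\<^sup>2 * word_prob n q z = (I z * word_prob n p z)\<^sup>2 / word_prob n q z" for z
    using assms by (simp_all add: f_def W_def word_prob_def power2_eq_square)
  have "var_IS N n I p q = measure_pmf.variance (Pi_pmf {..<N} (\<lambda>_. False) (\<lambda>_. pattern_pmf n q))
      (\<lambda>zs. (1 / real N) * (\<Sum>j<N. f (zs j)))"
    by (simp only: var_IS_def samples_pmf_def P_IS_def[abs_def] f_def)
  also have "\<dots> = measure_pmf.variance (pattern_pmf n q) f / real N"
    by (rule variance_sample_mean_Pi_pmf[OF fin f_nonneg \<open>N \<ge> 1\<close>])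
  also have "measure_pmf.variance (pattern_pmf n q) f
      = measure_pmf.expectation (pattern_pmf n q) (\<lambda>z. (f z)\<^sup>2) - (measure_pmf.expectation (pattern_pmf n q) f)\<^sup>2"
    using fin by (simp add: measure_pmf.variance_eq integrable_measure_pmf_finite)
  also have "\<dots> = (\<Sum>z\<in>binary_words n. (I z * word_prob n p z)\<^sup>2 / word_prob n q z)
        - (\<Sum>z\<in>binary_words n. I z * word_prob n p z)\<^sup>2"
    using assms by (simp only: expectation_pattern_pmf weighted weighted_square)
  finally show ?thesis .
qed

theorem lemma3:
  fixes n N t :: nat and p :: real and I :: "(nat \<Rightarrow> bool) \<Rightarrow> real"
  assumes "n \<ge> 1" and "N \<ge> 1" and "0 < p" and "p < 1"
    and "t < n"
    and "\<And>z. (\<forall>i\<ge>n. \<not> z i) \<Longrightarrow> I z \<in> {0, 1}"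
    and "\<And>z. (\<forall>i\<ge>n. \<not> z i) \<Longrightarrow> wt n z \<le> t \<Longrightarrow> I z = 0"
  shows "convex_on {0<..<1} (\<lambda>q. var_IS N n I p q)"
proof -
  have I_nonneg: "0 \<le> I z" if "z \<in> binary_words n" for z
    using assms(6)[of z] that by (auto simp: binary_words_def)
  let ?c = "\<lambda>z. I z * word_prob n p z"
  have "var_IS N n I p q = ((\<Sum>z\<in>binary_words n. (?c z)\<^sup>2 / word_prob n q z)
      - (\<Sum>z\<in>binary_words n. ?c z)\<^sup>2) / real N" if "q \<in> {0<..<1}" for q
    using var_IS_eq_sum[OF \<open>N \<ge> 1\<close> _ _ _ _ I_nonneg] that assms(3,4) by simp
  then have "convex_on {0<..<1} (\<lambda>q. var_IS N n I p q) \<longleftrightarrow> convex_on {0<..<1}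
      (\<lambda>q. ((\<Sum>z\<in>binary_words n. (?c z)\<^sup>2 / word_prob n q z) - (\<Sum>z\<in>binary_words n. ?c z)\<^sup>2) / real N)"
    by (rule convex_on_cong)
  also have "\<dots>"
    by (intro convex_on_cdiv convex_on_diff convex_on_sum_fun convex_on_divide_word_prob
        finite_binary_words concave_on_const[THEN iffD2]) auto
  finally show ?thesis .
qed

end
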